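(* Let Assumptions (A1), (A2) and (A4) hold for Algorithm Min-max DS. For $\epsilon\in(0,1)$, let $k_\epsilon$ be the first iteration index such that $\mu_{k_\epsilon+1}\le\epsilon$. Then $$k_\epsilon\ \le\ \frac{2}{c\alpha_0^2}\big(f(x_0)-F^{\min}\big)+\frac{\Omega\,(L_{\max}+c)^2(\mathcal{C}_1+1)^2}{4\beta_1^2}\,\epsilon^{-2},$$ where $\Omega=\frac{\gamma^2}{1-\beta_2^2}\left(\gamma^{-2}\alpha_0^2+\frac2c(f(x_0)-F^{\min})\right)$.
   Context: $F=(f_1,\dots,f_m)$, $m\ge2$, $I=\{1,\dots,m\}$, $f(x):=\max_{i\in I}f_i(x)$. Algorithm Min-max DS: choose $x_0$ with $f_i(x_0)<\infty$, $\alpha_0>0$, $0<\beta_1\le\beta_2<1$, $\gamma\ge1$, a set $\mathcal{D}$ of positive spanning sets of unit vectors, and $c>0$. At iteration $k$: choose $D_k\in\mathcal{D}$; if some $d_k\in D_k$ satisfies $f(x_k+\alpha_kd_k)<f(x_k)-\frac c2\alpha_k^2$, the iteration is successful, $x_{k+1}=x_k+\alpha_kd_k$, $\alpha_{k+1}\in[\alpha_k,\gamma\alpha_k]$; otherwise unsuccessful, $x_{k+1}=x_k$, $\alpha_{k+1}\in[\beta_1\alpha_k,\beta_2\alpha_k]$. $\mu(x):=-\min_{\|d\|\le1}\max_{i\in I}\nabla f_i(x)^\top d$, $\mu_k:=\mu(x_k)$, $\mu_{D_k}:=-\min_{d\in D_k,\|d\|\le1}\max_{i\in I}\nabla f_i(x_k)^\top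 d$. Pareto dominance: $y\prec z$ iff $z-y\in\mathbb{R}^m_+\setminus\{0\}$. (A1): each $f_i$ is continuously differentiable with $L_i$-Lipschitz gradient; $L_{\max}=\max_iL_i$. (A2): each $f_i$ is bounded below by $f_i^{\min}$ and above by $f_i^{\max}$ on $\{x: F(x)$ is not dominated by $F(x_0)\}$; $F^{\min}=\min_if_i^{\min}$. (A4): there exists $\mathcal{C}_1>0$ with $|\mu_{D_k}-\mu_k|\le\mathcal{C}_1\mu_{D_k}$ for all $k\ge0$. *)

theory Defs
  imports "HOL-Analysis.Analysis"
begin

text \<open>Objectives are indexed by I = {1..m}; F i is f_i, G i is the gradient of f_i.\<close>

definition fmax_of :: "nat \<Rightarrow> (nat \<Rightarrow> 'a \<Rightarrow> real) \<Rightarrow> 'a \<Rightarrow> real" where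
  "fmax_of m F x = Max ((\<lambda>i. F i x) ` {1..m})"

definition pareto_less :: "nat \<Rightarrow> (nat \<Rightarrow> real) \<Rightarrow> (nat \<Rightarrow> real) \<Rightarrow> bool" where
  "pareto_less m y z \<longleftrightarrow> (\<forall>i\<in>{1..m}. y i \<le> z i) \<and> (\<exists>i\<in>{1..m}. y i \<noteq> z i)"

definition pos_spanning :: "'a::euclidean_space set \<Rightarrow> bool" where
  "pos_spanning D \<longleftrightarrow> finite D \<and>
     (\<forall>v. \<exists>l. (\<forall>d\<in>D. 0 \<le> l d) \<and> v = (\<Sum>d\<in>D. l d *\<^sub>R d))"

definition mu :: "nat \<Rightarrow> (nat \<Rightarrow> 'a::euclidean_space \<Rightarrow> 'a) \<Rightarrow> 'a \<Rightarrow> real" where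
  "mu m G x = - (INF d\<in>cball 0 1. Max ((\<lambda>i. G i x \<bullet> d) ` {1..m}))"

definition mu_D :: "nat \<Rightarrow> (nat \<Rightarrow> 'a::euclidean_space \<Rightarrow> 'a) \<Rightarrow> 'a set \<Rightarrow> 'a \<Rightarrow> real" where
  "mu_D m G D x = - (INF d\<in>{d\<in>D. norm d \<le> 1}. Max ((\<lambda>i. G i x \<bullet> d) ` {1..m}))"

definition minmax_DS ::
  "nat \<Rightarrow> (nat \<Rightarrow> 'a::euclidean_space \<Rightarrow> real) \<Rightarrow> real \<Rightarrow> real \<Rightarrow> real \<Rightarrow> real \<Rightarrow> 'a set set
    \<Rightarrow> (nat \<Rightarrow> 'a) \<Rightarrow> (nat \<Rightarrow> real) \<Rightarrow> (nat \<Rightarrow> 'a set) \<Rightarrow> bool" where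
  "minmax_DS m F \<beta>1 \<beta>2 \<gamma> c \<D> x \<alpha> D \<longleftrightarrow>
     0 < \<alpha> 0 \<and> 0 < \<beta>1 \<and> \<beta>1 \<le> \<beta>2 \<and> \<beta>2 < 1 \<and> 1 \<le> \<gamma> \<and> 0 < c \<and>
     (\<forall>P\<in>\<D>. pos_spanning P \<and> (\<forall>d\<in>P. norm d = 1)) \<and>
     (\<forall>k. D k \<in> \<D> \<and>
        (if \<exists>d\<in>D k. fmax_of m F (x k + \<alpha> k *\<^sub>R d) < fmax_of m F (x k) - c / 2 * \<alpha> k ^ 2
         then (\<exists>d\<in>D k. fmax_of m F (x k + \<alpha> k *\<^sub>R d) < fmax_of m F (x k) - c / 2 * \<alpha> k ^ 2
                        \<and> x (Suc k) = x k + \<alpha> k *\<^sub>R d)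
              \<and> \<alpha> k \<le> \<alpha> (Suc k) \<and> \<alpha> (Suc k) \<le> \<gamma> * \<alpha> k
         else x (Suc k) = x k \<and> \<beta>1 * \<alpha> k \<le> \<alpha> (Suc k) \<and> \<alpha> (Suc k) \<le> \<beta>2 * \<alpha> k))"

end

theory Submission
  imports Defs
begin

text \<open>
  Every successful iteration decreases the max-function by at least c/2 times the squared step,
  and since the iterates stay in the region where (A2) bounds the objectives below, the squared
  steps of successful iterations sum to at most 2/c (f(x_0) - F_min). At an unsuccessful
  iteration the descent lemma gives mu_{D_k} \<le> (L_max + c) alpha_k / 2, so by (A4) every
  unsuccessful iteration before k_eps has a step larger than
  tau = 2 eps / ((C_1 + 1)(L_max + c)). Hence steps never fall below min (alpha_0, beta_1 tau).
  Iterations with step at least beta_1 tau are counted through the sum of all squared steps,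
  which the step-size rule bounds by Omega; those with a smaller step are successful with
  step at least alpha_0, and are counted through the successful sum.
\<close>

lemma lipschitz_gradient_quadratic_upper_bound:
  fixes f :: "'a::euclidean_space \<Rightarrow> real"
  assumes grad: "\<forall>y. (f has_derivative (\<lambda>h. g y \<bullet> h)) (at y)"
    and lip: "\<forall>y z. norm (g y - g z) \<le> L * norm (y - z)"
  shows "f (y + h) \<le> f y + g y \<bullet> h + L / 2 * norm h ^ 2"
proof -
  define \<phi> where "\<phi> t = f (y + t *\<^sub>R h) - t * (g y \<bullet> h) - L / 2 * t^2 * norm h ^ 2" for t
  have "\<phi> 1 \<le> \<phi> 0"
  proof (rule DERIV_nonpos_imp_nonincreasing[of 0 1 \<phi>])
    fix t :: real assume t: "0 \<le> t" "t \<le> 1"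
    have "((\<lambda>t. y + t *\<^sub>R h) has_derivative (\<lambda>s. s *\<^sub>R h)) (at t)"
      by (auto intro!: derivative_eq_intros)
    note has_derivative_compose[OF this grad[rule_format, of "y + t *\<^sub>R h"]]
    moreover have "(\<lambda>s. g (y + t *\<^sub>R h) \<bullet> (s *\<^sub>R h)) = (*) (g (y + t *\<^sub>R h) \<bullet> h)"
      by (auto simp: mult.commute)
    ultimately have f_line: "((\<lambda>t. f (y + t *\<^sub>R h)) has_real_derivative (g (y + t *\<^sub>R h) \<bullet> h)) (at t)"
      by (simp add: has_field_derivative_def)
    have "(\<phi> has_real_derivative (g (y + t *\<^sub>R h) \<bullet> h - g y \<bullet> h - L * t * norm h ^ 2)) (at t)"
      unfolding \<phi>_def by (rule derivative_eq_intros f_line refl | simp)+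
    moreover have "(g (y + t *\<^sub>R h) - g y) \<bullet> h \<le> L * t * norm h ^ 2"
    proof -
      have "(g (y + t *\<^sub>R h) - g y) \<bullet> h \<le> norm (g (y + t *\<^sub>R h) - g y) * norm h"
        by (rule norm_cauchy_schwarz)
      also have "\<dots> \<le> (L * norm (t *\<^sub>R h)) * norm h"
        using lip[rule_format, of "y + t *\<^sub>R h" y] by (intro mult_right_mono) auto
      finally show ?thesis using t by (simp add: power2_eq_square)
    qed
    ultimately show "\<exists>y. (\<phi> has_real_derivative y) (at t) \<and> y \<le> 0"
      by (auto simp: inner_diff_left)
  qed simp
  then show ?thesis unfolding \<phi>_def by simp
qed

lemma lipschitz_constant_nonneg:
  fixes g :: "'a::euclidean_space \<Rightarrow> 'b::real_normed_vector"
  assumes "\<forall>y z. norm (g y - g z) \<le> L * norm (y - z)"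
  shows "0 \<le> L"
proof -
  obtain b :: 'a where "b \<in> Basis" using nonempty_Basis by blast
  then have "norm (g b - g 0) \<le> L" using assms[rule_format, of b 0] by (simp add: norm_Basis)
  then show ?thesis using norm_ge_zero order_trans by blast
qed

lemma max_lipschitz_constant_nonneg:
  fixes G :: "nat \<Rightarrow> 'a::euclidean_space \<Rightarrow> 'b::real_normed_vector"
  assumes "\<forall>i\<in>{1..m}. \<forall>y z. norm (G i y - G i z) \<le> L i * norm (y - z)" and "1 \<le> m"
  shows "0 \<le> Max (L ` {1..m})"
proof -
  have "0 \<le> L 1" using assms by (intro lipschitz_constant_nonneg[of "G 1"]) auto
  also have "L 1 \<le> Max (L ` {1..m})" using assms(2) by (intro Max_ge) auto
  finally show ?thesis .
qed

lemma pos_spanning_nonempty: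
  assumes "pos_spanning (P :: 'a::euclidean_space set)"
  shows "P \<noteq> {}"
proof
  obtain b :: 'a where b: "b \<in> Basis" using nonempty_Basis by blast
  assume "P = {}"
  then have "b = 0" using assms unfolding pos_spanning_def by auto
  then show False using b by auto
qed

lemma fmax_of_ge: "i \<in> {1..m} \<Longrightarrow> F i x \<le> fmax_of m F x"
  unfolding fmax_of_def by (intro Max_ge) auto

lemma fmax_of_attained:
  assumes "1 \<le> m"
  obtains j where "j \<in> {1..m}" "fmax_of m F x = F j x"
proof -
  have "fmax_of m F x \<in> (\<lambda>i. F i x) ` {1..m}"
    unfolding fmax_of_def using assms by (intro Max_in) auto
  then show ?thesis using that by auto
qed

lemma fmax_of_mono:
  assumes "\<forall>i\<in>{1..m}. F i x \<le> F i y"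
  shows "fmax_of m F x \<le> fmax_of m F y"
proof (cases "m = 0")
  case False
  then have "1 \<le> m" by simp
  then obtain j where j: "j \<in> {1..m}" "fmax_of m F x = F j x" by (rule fmax_of_attained)
  then have "F j x \<le> F j y" using assms by blast
  with j show ?thesis using fmax_of_ge[OF j(1), of F y] by linarith
qed (simp add: fmax_of_def)

lemma max_inner_ge_of_unsuccessful_step:
  fixes F :: "nat \<Rightarrow> 'a::euclidean_space \<Rightarrow> real"
  assumes grad: "\<forall>i\<in>{1..m}. \<forall>y. (F i has_derivative (\<lambda>h. G i y \<bullet> h)) (at y)"
    and lip: "\<forall>i\<in>{1..m}. \<forall>y z. norm (G i y - G i z) \<le> L i * norm (y - z)"
    and m: "1 \<le> m" and \<alpha>: "0 < \<alpha>" and d: "norm d = 1"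
    and unsuccessful: "fmax_of m F x - c / 2 * \<alpha>^2 \<le> fmax_of m F (x + \<alpha> *\<^sub>R d)"
  shows "- ((Max (L ` {1..m}) + c) * \<alpha> / 2) \<le> Max ((\<lambda>i. G i x \<bullet> d) ` {1..m})"
proof -
  obtain j where j: "j \<in> {1..m}" "fmax_of m F (x + \<alpha> *\<^sub>R d) = F j (x + \<alpha> *\<^sub>R d)"
    using m by (rule fmax_of_attained)
  have "F j (x + \<alpha> *\<^sub>R d) \<le> F j x + G j x \<bullet> (\<alpha> *\<^sub>R d) + L j / 2 * norm (\<alpha> *\<^sub>R d) ^ 2"
    using grad lip j(1) by (intro lipschitz_gradient_quadratic_upper_bound) auto
  also have "\<dots> \<le> fmax_of m F x + \<alpha> * (G j x \<bullet> d) + Max (L ` {1..m}) / 2 * \<alpha>^2"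
    using fmax_of_ge[OF j(1)] j(1) \<alpha> d by (auto intro!: add_mono mult_right_mono)
  finally have "fmax_of m F x - c / 2 * \<alpha>^2 \<le> fmax_of m F x + \<alpha> * (G j x \<bullet> d) + Max (L ` {1..m}) / 2 * \<alpha>^2"
    using unsuccessful j(2) by linarith
  then have "- ((Max (L ` {1..m}) + c) * \<alpha> / 2) * \<alpha> \<le> (G j x \<bullet> d) * \<alpha>"
    by (simp add: power2_eq_square field_simps)
  then have "- ((Max (L ` {1..m}) + c) * \<alpha> / 2) \<le> G j x \<bullet> d"
    using \<alpha> by (rule mult_right_le_imp_le)
  also have "\<dots> \<le> Max ((\<lambda>i. G i x \<bullet> d) ` {1..m})"
    using j(1) by (intro Max_ge) auto
  finally show ?thesis .
qed

lemma mu_D_le_of_unsuccessful_poll: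
  fixes F :: "nat \<Rightarrow> 'a::euclidean_space \<Rightarrow> real"
  assumes grad: "\<forall>i\<in>{1..m}. \<forall>y. (F i has_derivative (\<lambda>h. G i y \<bullet> h)) (at y)"
    and lip: "\<forall>i\<in>{1..m}. \<forall>y z. norm (G i y - G i z) \<le> L i * norm (y - z)"
    and m: "1 \<le> m" and \<alpha>: "0 < \<alpha>" and P: "P \<noteq> {}" "\<forall>d\<in>P. norm d = 1"
    and unsuccessful: "\<forall>d\<in>P. fmax_of m F x - c / 2 * \<alpha>^2 \<le> fmax_of m F (x + \<alpha> *\<^sub>R d)"
  shows "mu_D m G P x \<le> (Max (L ` {1..m}) + c) * \<alpha> / 2"
proof -
  have "{d \<in> P. norm d \<le> 1} = P" using P by auto
  moreover have "- ((Max (L ` {1..m}) + c) * \<alpha> / 2) \<le> (INF d\<in>P. Max ((\<lambda>i. G i x \<bullet> d) ` {1..m}))"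
    using P unsuccessful
    by (intro cINF_greatest max_inner_ge_of_unsuccessful_step[OF grad lip m \<alpha>]) auto
  ultimately show ?thesis unfolding mu_D_def by simp
qed

locale step_size_rule =
  fixes \<alpha> :: "nat \<Rightarrow> real" and successful :: "nat \<Rightarrow> bool" and \<beta>1 \<beta>2 \<gamma> :: real
  assumes initial_step_pos: "0 < \<alpha> 0"
    and contraction_factors: "0 < \<beta>1" "\<beta>1 \<le> \<beta>2" "\<beta>2 < 1"
    and expansion_factor: "1 \<le> \<gamma>"
    and successful_step: "successful k \<Longrightarrow> \<alpha> k \<le> \<alpha> (Suc k) \<and> \<alpha> (Suc k) \<le> \<gamma> * \<alpha> k"
    and unsuccessful_step: "\<not> successful k \<Longrightarrow> \<beta>1 * \<alpha> k \<le> \<alpha> (Suc k) \<and> \<alpha> (Suc k) \<le> \<beta>2 * \<alpha> k"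
begin

lemma step_pos: "0 < \<alpha> k"
proof (induction k)
  case (Suc k)
  then show ?case
    using successful_step[of k] unsuccessful_step[of k] contraction_factors
    by (cases "successful k") (auto intro: mult_pos_pos order.strict_trans2)
qed (rule initial_step_pos)

lemma sum_sq_steps_le:
  "(1 - \<beta>2^2) * (\<Sum>k<K. \<alpha> k ^ 2)
     \<le> \<alpha> 0 ^ 2 + \<gamma>^2 * (\<Sum>k\<in>{k\<in>{..<K}. successful k}. \<alpha> k ^ 2)"
proof -
  have next_step: "\<alpha> (Suc k) ^ 2 \<le> \<beta>2^2 * \<alpha> k ^ 2 + \<gamma>^2 * (if successful k then \<alpha> k ^ 2 else 0)"
    for k
  proof (cases "successful k")
    case True
    then have "\<alpha> (Suc k) ^ 2 \<le> (\<gamma> * \<alpha> k) ^ 2"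
      using successful_step[of k] step_pos[of k] by (intro power_mono) auto
    then show ?thesis using True by (simp add: power_mult_distrib add_increasing)
  next
    case False
    then have "\<alpha> (Suc k) ^ 2 \<le> (\<beta>2 * \<alpha> k) ^ 2"
      using unsuccessful_step[of k] step_pos[of "Suc k"] by (intro power_mono) auto
    then show ?thesis using False by (simp add: power_mult_distrib)
  qed
  have "(\<Sum>k<K. \<alpha> k ^ 2) \<le> (\<Sum>k<Suc K. \<alpha> k ^ 2)" by simp
  also have "\<dots> = \<alpha> 0 ^ 2 + (\<Sum>k<K. \<alpha> (Suc k) ^ 2)" by (subst sum.lessThan_Suc_shift) simp
  also have "\<dots> \<le> \<alpha> 0 ^ 2 + (\<Sum>k<K. \<beta>2^2 * \<alpha> k ^ 2 + \<gamma>^2 * (if successful k then \<alpha> k ^ 2 else 0))"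
    by (intro add_left_mono sum_mono next_step)
  also have "\<dots> = \<alpha> 0 ^ 2 + \<beta>2^2 * (\<Sum>k<K. \<alpha> k ^ 2)
                   + \<gamma>^2 * (\<Sum>k\<in>{k\<in>{..<K}. successful k}. \<alpha> k ^ 2)"
    unfolding sum.inter_filter[OF finite_lessThan] by (simp add: sum.distrib sum_distrib_left)
  finally show ?thesis by (simp add: algebra_simps)
qed

lemma step_ge_min:
  assumes large: "\<forall>k<K. \<not> successful k \<longrightarrow> \<tau> < \<alpha> k"
  shows "k \<le> K \<Longrightarrow> min (\<alpha> 0) (\<beta>1 * \<tau>) \<le> \<alpha> k"
proof (induction k)
  case (Suc k)
  then have "k < K" "min (\<alpha> 0) (\<beta>1 * \<tau>) \<le> \<alpha> k" by auto
  then show ?case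
  proof (cases "successful k")
    case False
    then have "\<beta>1 * \<tau> \<le> \<beta>1 * \<alpha> k"
      using large \<open>k < K\<close> contraction_factors(1) by (simp add: less_imp_le)
    then show ?thesis using unsuccessful_step[OF False] by linarith
  qed (use successful_step in fastforce)
qed simp

lemma sum_sq_steps_le_of_successful_sum:
  assumes "(\<Sum>k\<in>{k\<in>{..<K}. successful k}. \<alpha> k ^ 2) \<le> S"
  shows "(\<Sum>k<K. \<alpha> k ^ 2) \<le> \<gamma>^2 / (1 - \<beta>2^2) * (\<alpha> 0 ^ 2 / \<gamma>^2 + S)"
proof -
  have "0 < 1 - \<beta>2^2"
    using contraction_factors by (simp add: power_less_one_iff abs_square_less_1)
  moreover have "\<alpha> 0 ^ 2 + \<gamma>^2 * (\<Sum>k\<in>{k\<in>{..<K}. successful k}. \<alpha> k ^ 2)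
                   \<le> \<gamma>^2 * (\<alpha> 0 ^ 2 / \<gamma>^2 + S)"
    using assms expansion_factor by (simp add: algebra_simps)
  ultimately show ?thesis
    using sum_sq_steps_le[of K] by (simp add: field_simps)
qed

lemma card_small_steps_le:
  assumes \<tau>: "0 < \<tau>"
    and large: "\<forall>k<K. \<not> successful k \<longrightarrow> \<tau> < \<alpha> k"
  shows "real (card {k\<in>{..<K}. \<alpha> k < \<beta>1 * \<tau>}) * \<alpha> 0 ^ 2
           \<le> (\<Sum>k\<in>{k\<in>{..<K}. successful k}. \<alpha> k ^ 2)"
proof -
  define small where "small = {k\<in>{..<K}. \<alpha> k < \<beta>1 * \<tau>}"
  have "\<beta>1 * \<tau> \<le> \<tau>" using \<tau> contraction_factors by (simp add: mult_le_cancel_right1)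
  have "real (card small) * \<alpha> 0 ^ 2 = (\<Sum>k\<in>small. \<alpha> 0 ^ 2)" by simp
  also have "\<dots> \<le> (\<Sum>k\<in>small. \<alpha> k ^ 2)"
  proof (intro sum_mono)
    fix k assume "k \<in> small"
    then have "\<alpha> 0 \<le> \<alpha> k" using step_ge_min[OF large, of k] unfolding small_def by auto
    then show "\<alpha> 0 ^ 2 \<le> \<alpha> k ^ 2" using initial_step_pos by (simp add: power_mono)
  qed
  also have "\<dots> \<le> (\<Sum>k\<in>{k\<in>{..<K}. successful k}. \<alpha> k ^ 2)"
  proof (intro sum_mono2)
    show "small \<subseteq> {k\<in>{..<K}. successful k}"
    proof
      fix k assume "k \<in> small"
      then have "k < K" "\<alpha> k < \<tau>" using \<open>\<beta>1 * \<tau> \<le> \<tau>\<close> by (auto simp: small_def)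
      then show "k \<in> {k\<in>{..<K}. successful k}" using large by fastforce
    qed
  qed auto
  finally show ?thesis unfolding small_def .
qed

lemma iteration_count_le:
  assumes \<tau>: "0 < \<tau>"
    and large: "\<forall>k<K. \<not> successful k \<longrightarrow> \<tau> < \<alpha> k"
    and successful_sum: "(\<Sum>k\<in>{k\<in>{..<K}. successful k}. \<alpha> k ^ 2) \<le> S"
  shows "real K \<le> S / \<alpha> 0 ^ 2 + \<gamma>^2 / (1 - \<beta>2^2) * (\<alpha> 0 ^ 2 / \<gamma>^2 + S) / (\<beta>1 * \<tau>)^2"
proof -
  define \<theta> where "\<theta> = \<beta>1 * \<tau>"
  define big where "big = {k\<in>{..<K}. \<theta> \<le> \<alpha> k}"
  define small where "small = {k\<in>{..<K}. \<alpha> k < \<theta>}"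
  have \<theta>: "0 < \<theta>" unfolding \<theta>_def using \<tau> contraction_factors by simp
  have "real (card big) * \<theta>^2 = (\<Sum>k\<in>big. \<theta>^2)" by simp
  also have "\<dots> \<le> (\<Sum>k\<in>big. \<alpha> k ^ 2)"
    using \<theta> by (intro sum_mono power_mono) (auto simp: big_def)
  also have "\<dots> \<le> (\<Sum>k<K. \<alpha> k ^ 2)"
    by (intro sum_mono2) (auto simp: big_def)
  also have "\<dots> \<le> \<gamma>^2 / (1 - \<beta>2^2) * (\<alpha> 0 ^ 2 / \<gamma>^2 + S)"
    using successful_sum by (rule sum_sq_steps_le_of_successful_sum)
  finally have big_count: "real (card big) \<le> \<gamma>^2 / (1 - \<beta>2^2) * (\<alpha> 0 ^ 2 / \<gamma>^2 + S) / \<theta>^2"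
    using \<theta> by (simp only: pos_le_divide_eq zero_less_power)
  have "real (card small) * \<alpha> 0 ^ 2 \<le> S"
    using card_small_steps_le[OF \<tau> large] successful_sum unfolding small_def \<theta>_def by linarith
  then have small_count: "real (card small) \<le> S / \<alpha> 0 ^ 2"
    using initial_step_pos by (simp add: pos_le_divide_eq)
  have "{..<K} = big \<union> small" "big \<inter> small = {}" unfolding big_def small_def by auto
  then have "K = card big + card small"
    by (metis card_Un_disjoint card_lessThan finite_Un finite_lessThan)
  then show ?thesis using big_count small_count unfolding \<theta>_def by simp
qed

end

locale minmax_DS_run =
  fixes m :: nat and F :: "nat \<Rightarrow> 'a::euclidean_space \<Rightarrow> real" and \<beta>1 \<beta>2 \<gamma> c :: real
    and \<D> :: "'a set set" and x :: "nat \<Rightarrow> 'a" and \<alpha> :: "nat \<Rightarrow> real" and D :: "nat \<Rightarrow> 'a set"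
  assumes run: "minmax_DS m F \<beta>1 \<beta>2 \<gamma> c \<D> x \<alpha> D"
begin

definition successful :: "nat \<Rightarrow> bool" where
  "successful k \<longleftrightarrow>
     (\<exists>d\<in>D k. fmax_of m F (x k + \<alpha> k *\<^sub>R d) < fmax_of m F (x k) - c / 2 * \<alpha> k ^ 2)"

lemma parameters: "0 < \<alpha> 0" "0 < \<beta>1" "\<beta>1 \<le> \<beta>2" "\<beta>2 < 1" "1 \<le> \<gamma>" "0 < c"
  using run unfolding minmax_DS_def by auto

lemma poll_set: "pos_spanning (D k)" "\<forall>d\<in>D k. norm d = 1"
  using run unfolding minmax_DS_def by auto

lemma iteration_rule:
  "if successful k
   then (\<exists>d\<in>D k. fmax_of m F (x k + \<alpha> k *\<^sub>R d) < fmax_of m F (x k) - c / 2 * \<alpha> k ^ 2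
                  \<and> x (Suc k) = x k + \<alpha> k *\<^sub>R d)
        \<and> \<alpha> k \<le> \<alpha> (Suc k) \<and> \<alpha> (Suc k) \<le> \<gamma> * \<alpha> k
   else x (Suc k) = x k \<and> \<beta>1 * \<alpha> k \<le> \<alpha> (Suc k) \<and> \<alpha> (Suc k) \<le> \<beta>2 * \<alpha> k"
  using run unfolding minmax_DS_def successful_def by blast

lemma successful_iteration:
  assumes "successful k"
  shows "fmax_of m F (x (Suc k)) < fmax_of m F (x k) - c / 2 * \<alpha> k ^ 2"
    and "\<alpha> k \<le> \<alpha> (Suc k)" "\<alpha> (Suc k) \<le> \<gamma> * \<alpha> k"
  using iteration_rule[of k] assms by auto

lemma unsuccessful_iteration:
  assumes "\<not> successful k"
  shows "x (Suc k) = x k" "\<beta>1 * \<alpha> k \<le> \<alpha> (Suc k)" "\<alpha> (Suc k) \<le> \<beta>2 * \<alpha> k"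
  using iteration_rule[of k] assms by auto

sublocale step_size_rule \<alpha> successful \<beta>1 \<beta>2 \<gamma>
  using parameters successful_iteration unsuccessful_iteration by unfold_locales auto

lemma fmax_le_minus_successful_sum:
  "fmax_of m F (x N) \<le> fmax_of m F (x 0) - c / 2 * (\<Sum>k\<in>{k\<in>{..<N}. successful k}. \<alpha> k ^ 2)"
  unfolding sum.inter_filter[OF finite_lessThan]
proof (induction N)
  case (Suc N)
  then show ?case
    using successful_iteration[of N] unsuccessful_iteration[of N]
    by (cases "successful N") (auto simp: algebra_simps)
qed simp

lemma iterate_not_dominated: "\<not> pareto_less m (\<lambda>j. F j (x 0)) (\<lambda>j. F j (x N))"
proof
  assume dominated: "pareto_less m (\<lambda>j. F j (x 0)) (\<lambda>j. F j (x N))"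
  have "x N = x 0 \<or> fmax_of m F (x N) < fmax_of m F (x 0)"
  proof (induction N)
    case (Suc N)
    have "0 < c / 2 * \<alpha> N ^ 2" using parameters step_pos[of N] by simp
    then show ?case
      using Suc successful_iteration[of N] unsuccessful_iteration[of N]
      by (cases "successful N") auto
  qed simp
  moreover have "fmax_of m F (x 0) \<le> fmax_of m F (x N)"
    using dominated unfolding pareto_less_def by (intro fmax_of_mono) auto
  ultimately show False using dominated unfolding pareto_less_def by auto
qed

lemma mu_D_le_if_unsuccessful:
  assumes grad: "\<forall>i\<in>{1..m}. \<forall>y. (F i has_derivative (\<lambda>h. G i y \<bullet> h)) (at y)"
    and lip: "\<forall>i\<in>{1..m}. \<forall>y z. norm (G i y - G i z) \<le> L i * norm (y - z)"
    and m: "1 \<le> m" and unsuccessful: "\<not> successful k"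
  shows "mu_D m G (D k) (x k) \<le> (Max (L ` {1..m}) + c) * \<alpha> k / 2"
  using unsuccessful poll_set pos_spanning_nonempty[OF poll_set(1)]
  by (intro mu_D_le_of_unsuccessful_poll[OF grad lip m step_pos])
     (auto simp: successful_def not_less)

lemma successful_sq_sum_le:
  assumes lower: "\<forall>i\<in>{1..m}. \<forall>y. \<not> pareto_less m (\<lambda>j. F j (x 0)) (\<lambda>j. F j y) \<longrightarrow> fmin i \<le> F i y"
    and m: "1 \<le> m"
  shows "(\<Sum>k\<in>{k\<in>{..<N}. successful k}. \<alpha> k ^ 2) \<le> 2 / c * (fmax_of m F (x 0) - Min (fmin ` {1..m}))"
proof -
  have one: "1 \<in> {1..m}" using m by simp
  have "Min (fmin ` {1..m}) \<le> fmin 1" using one by (intro Min_le) auto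
  also have "\<dots> \<le> F 1 (x N)" using lower one iterate_not_dominated by blast
  also have "\<dots> \<le> fmax_of m F (x N)" using one by (rule fmax_of_ge)
  finally show ?thesis
    using fmax_le_minus_successful_sum[of N] parameters by (simp add: field_simps)
qed

lemma step_gt_if_unsuccessful:
  assumes grad: "\<forall>i\<in>{1..m}. \<forall>y. (F i has_derivative (\<lambda>h. G i y \<bullet> h)) (at y)"
    and lip: "\<forall>i\<in>{1..m}. \<forall>y z. norm (G i y - G i z) \<le> L i * norm (y - z)"
    and m: "1 \<le> m" and unsuccessful: "\<not> successful k"
    and C1: "0 \<le> C1" and mu_D_error: "\<bar>mu_D m G (D k) (x k) - mu m G (x k)\<bar> \<le> C1 * mu_D m G (D k) (x k)"
    and not_stationary: "\<epsilon> < mu m G (x (Suc k))"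
  shows "2 * \<epsilon> / ((C1 + 1) * (Max (L ` {1..m}) + c)) < \<alpha> k"
proof -
  have "\<epsilon> < mu m G (x k)" using not_stationary unsuccessful_iteration(1)[OF unsuccessful] by simp
  also have "\<dots> \<le> (C1 + 1) * mu_D m G (D k) (x k)" using mu_D_error by argo
  also have "\<dots> \<le> (C1 + 1) * ((Max (L ` {1..m}) + c) * \<alpha> k / 2)"
    using mu_D_le_if_unsuccessful[OF grad lip m unsuccessful] C1 by (intro mult_left_mono) auto
  finally have "2 * \<epsilon> < ((C1 + 1) * (Max (L ` {1..m}) + c)) * \<alpha> k" by simp
  moreover have "0 < (C1 + 1) * (Max (L ` {1..m}) + c)"
    using max_lipschitz_constant_nonneg[OF lip m] C1 parameters by simp
  ultimately show ?thesis by (simp add: pos_divide_less_eq mult.commute)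
qed

end

theorem theorem3:
  fixes F :: "nat \<Rightarrow> 'a::euclidean_space \<Rightarrow> real" and G :: "nat \<Rightarrow> 'a \<Rightarrow> 'a"
    and m :: nat and L fmin fmax :: "nat \<Rightarrow> real"
    and C1 \<beta>1 \<beta>2 \<gamma> c \<epsilon> :: real and \<D> :: "'a set set"
    and x :: "nat \<Rightarrow> 'a" and \<alpha> :: "nat \<Rightarrow> real" and D :: "nat \<Rightarrow> 'a set" and k\<epsilon> :: nat
  assumes m2: "m \<ge> 2"
    and alg: "minmax_DS m F \<beta>1 \<beta>2 \<gamma> c \<D> x \<alpha> D"
    and A1_grad: "\<forall>i\<in>{1..m}. \<forall>y. (F i has_derivative (\<lambda>h. G i y \<bullet> h)) (at y)"
    and A1_lip: "\<forall>i\<in>{1..m}. \<forall>y z. norm (G i y - G i z) \<le> L i * norm (y - z)"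
    and A2: "\<forall>i\<in>{1..m}. \<forall>y. \<not> pareto_less m (\<lambda>j. F j (x 0)) (\<lambda>j. F j y)
                 \<longrightarrow> fmin i \<le> F i y \<and> F i y \<le> fmax i"
    and A4_pos: "C1 > 0"
    and A4: "\<forall>k. \<bar>mu_D m G (D k) (x k) - mu m G (x k)\<bar> \<le> C1 * mu_D m G (D k) (x k)"
    and eps: "0 < \<epsilon>" "\<epsilon> < 1"
    and first1: "mu m G (x (Suc k\<epsilon>)) \<le> \<epsilon>"
    and first2: "\<forall>j<k\<epsilon>. \<epsilon> < mu m G (x (Suc j))"
  shows "real k\<epsilon> \<le> 2 / (c * \<alpha> 0 ^ 2) * (fmax_of m F (x 0) - Min (fmin ` {1..m}))
          + (\<gamma>^2 / (1 - \<beta>2^2) * (\<alpha> 0 ^ 2 / \<gamma>^2 + 2 / c * (fmax_of m F (x 0) - Min (fmin ` {1..m}))))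
            * (Max (L ` {1..m}) + c)^2 * (C1 + 1)^2 / (4 * \<beta>1^2) * \<epsilon> powr (-2)"
proof -
  interpret minmax_DS_run m F \<beta>1 \<beta>2 \<gamma> c \<D> x \<alpha> D by unfold_locales (rule alg)
  define R where "R = fmax_of m F (x 0) - Min (fmin ` {1..m})"
  define Lm where "Lm = Max (L ` {1..m})"
  define \<tau> where "\<tau> = 2 * \<epsilon> / ((C1 + 1) * (Lm + c))"
  have m: "1 \<le> m" using m2 by simp
  have Lm: "0 \<le> Lm" unfolding Lm_def using A1_lip m by (rule max_lipschitz_constant_nonneg)
  then have \<tau>: "0 < \<tau>" unfolding \<tau>_def using eps A4_pos parameters by simp
  have "\<forall>k<k\<epsilon>. \<not> successful k \<longrightarrow> \<tau> < \<alpha> k"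
  proof (intro allI impI)
    fix k assume "k < k\<epsilon>" "\<not> successful k"
    with first2 A4 A4_pos show "\<tau> < \<alpha> k"
      unfolding \<tau>_def Lm_def by (intro step_gt_if_unsuccessful[OF A1_grad A1_lip m]) auto
  qed
  moreover have "(\<Sum>k\<in>{k\<in>{..<k\<epsilon>}. successful k}. \<alpha> k ^ 2) \<le> 2 / c * R"
    unfolding R_def using A2 by (intro successful_sq_sum_le[OF _ m]) blast
  ultimately have "real k\<epsilon> \<le> 2 / c * R / \<alpha> 0 ^ 2
      + \<gamma>^2 / (1 - \<beta>2^2) * (\<alpha> 0 ^ 2 / \<gamma>^2 + 2 / c * R) / (\<beta>1 * \<tau>)^2"
    using iteration_count_le[OF \<tau>] by blast
  also have "\<dots> = 2 / (c * \<alpha> 0 ^ 2) * R + \<gamma>^2 / (1 - \<beta>2^2) * (\<alpha> 0 ^ 2 / \<gamma>^2 + 2 / c * R)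
      * (Lm + c)^2 * (C1 + 1)^2 / (4 * \<beta>1^2) * \<epsilon> powr (-2)"
    unfolding \<tau>_def using eps parameters A4_pos Lm
    by (simp add: powr_minus field_simps power2_eq_square)
  finally show ?thesis unfolding R_def Lm_def .
qed

end
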